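(* Let $\varphi\in\mathrm{THT}^{1}$ satisfy the almost-empty requirement. Then $\varphi$ has an equilibrium model if and only if the formula $\varphi\wedge\mathsf F\mathsf G\bigwedge_{p\in P}\neg p$ is LTL-satisfiable.
   Context: Fix a finite set $P$ of atomic propositions. THT formulas over $P$: $\varphi ::= p \mid \bot \mid \varphi\vee\varphi \mid \varphi\wedge\varphi \mid \varphi\rightarrow\varphi \mid \mathsf{X}\varphi \mid \varphi\,\mathsf{U}\,\varphi \mid \varphi\,\mathsf{R}\,\varphi$, with $\neg\varphi:=\varphi\rightarrow\bot$, $\top:=\neg\bot$, and $\mathsf F\varphi$, $\mathsf G\varphi$ meaning $\top\mathsf U\varphi$ and $\bot\mathsf R\varphi$. A THT interpretation is a pair $M=(H,T)$ of infinite words over $2^P$ with $H(i)\subseteq T(i)$ for all $i$; it is total if $H=T$. Satisfaction $M,i\models\varphi$ is defined by: - $M,i\not\models\bot$; - $M,i\models p$ iff $p\in H(i)$; - $\vee$ and $\wedge$ are interpreted as usual; - $M,i\models\varphi\rightarrow\psi$ iff for both $H'\in\{H,T\}$, either $(H',T),i\not\models\varphi$ or $(H',T),i\models\psi$; - temporal modalities have their usual LTL clauses evaluated in $M$. $M\models\varphi$ means $M,0\models\varphi$. An equilibrium model of $\varphi$ is a total $(T,T)\models\varphi$ with $(H,T)\not\models\varphi$ whenever $H(i)\subseteq T(i)$ for all $i$ and $H\ne T$. LTL-satisfiability refers to standard LTL semantics over infinite words over $2^P$ (classical implication). $\mathrm{THT}^1$ is the set of THT formulas (all temporal modalities allowed)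 with implication height at most $1$, i.e. no nesting of $\rightarrow$, where negation counts as an implication. A position $i$ is empty in $(H,T)$ if $H(i)=\emptyset$. A total interpretation is almost-empty if it has only finitely many non-empty positions. $\varphi$ satisfies the almost-empty requirement if every equilibrium model of $\varphi$ is almost-empty. *)

theory Defs
  imports Main
begin

datatype 'a fml =
    Atom 'a
  | Bot
  | Or "'a fml" "'a fml"
  | And "'a fml" "'a fml"
  | Imp "'a fml" "'a fml"
  | Next "'a fml"
  | Until "'a fml" "'a fml"
  | Release "'a fml" "'a fml"

definition Neg :: "'a fml \<Rightarrow> 'a fml" where "Neg \<phi> = Imp \<phi> Bot"
definition Top :: "'a fml" where "Top = Neg Bot"
definition Fin :: "'a fml \<Rightarrow> 'a fml" where "Fin \<phi> = Until Top \<phi>"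
definition Glob :: "'a fml \<Rightarrow> 'a fml" where "Glob \<phi> = Release Bot \<phi>"

type_synonym 'a word = "nat \<Rightarrow> 'a set"

text \<open>THT satisfaction (H,T),i |= phi (H(i) subset T(i) is required separately).\<close>
fun tht :: "'a word \<Rightarrow> 'a word \<Rightarrow> nat \<Rightarrow> 'a fml \<Rightarrow> bool" where
  "tht H T i (Atom p) = (p \<in> H i)"
| "tht H T i Bot = False"
| "tht H T i (Or a b) = (tht H T i a \<or> tht H T i b)"
| "tht H T i (And a b) = (tht H T i a \<and> tht H T i b)"
| "tht H T i (Imp a b) = ((\<not> tht H T i a \<or> tht H T i b) \<and> (\<not> tht T T i a \<or> tht T T i b))"
| "tht H T i (Next a) = tht H T (Suc i) a"
| "tht H T i (Until a b) = (\<exists>k\<ge>i. tht H T k b \<and> (\<forall>j. i \<le> j \<and> j < k \<longrightarrow> tht H T j a))"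
| "tht H T i (Release a b) = (\<forall>k\<ge>i. tht H T k b \<or> (\<exists>j. i \<le> j \<and> j < k \<and> tht H T j a))"

fun ltl :: "'a word \<Rightarrow> nat \<Rightarrow> 'a fml \<Rightarrow> bool" where
  "ltl w i (Atom p) = (p \<in> w i)"
| "ltl w i Bot = False"
| "ltl w i (Or a b) = (ltl w i a \<or> ltl w i b)"
| "ltl w i (And a b) = (ltl w i a \<and> ltl w i b)"
| "ltl w i (Imp a b) = (ltl w i a \<longrightarrow> ltl w i b)"
| "ltl w i (Next a) = ltl w (Suc i) a"
| "ltl w i (Until a b) = (\<exists>k\<ge>i. ltl w k b \<and> (\<forall>j. i \<le> j \<and> j < k \<longrightarrow> ltl w j a))"
| "ltl w i (Release a b) = (\<forall>k\<ge>i. ltl w k b \<or> (\<exists>j. i \<le> j \<and> j < k \<and> ltl w j a))"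

definition ltl_satisfiable :: "'a fml \<Rightarrow> bool" where
  "ltl_satisfiable \<phi> = (\<exists>w. ltl w 0 \<phi>)"

text \<open>Implication height (negation counts since it abbreviates an implication).\<close>
fun imp_height :: "'a fml \<Rightarrow> nat" where
  "imp_height (Atom p) = 0"
| "imp_height Bot = 0"
| "imp_height (Or a b) = max (imp_height a) (imp_height b)"
| "imp_height (And a b) = max (imp_height a) (imp_height b)"
| "imp_height (Imp a b) = Suc (max (imp_height a) (imp_height b))"
| "imp_height (Next a) = imp_height a"
| "imp_height (Until a b) = max (imp_height a) (imp_height b)"
| "imp_height (Release a b) = max (imp_height a) (imp_height b)"

definition THT1 :: "'a fml set" where
  "THT1 = {\<phi>. imp_height \<phi> \<le> 1}"

definition equilibrium_model :: "'a fml \<Rightarrow> 'a word \<Rightarrow> bool" where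
  "equilibrium_model \<phi> T \<longleftrightarrow>
     tht T T 0 \<phi> \<and> (\<forall>H. (\<forall>i. H i \<subseteq> T i) \<and> H \<noteq> T \<longrightarrow> \<not> tht H T 0 \<phi>)"

definition almost_empty :: "'a word \<Rightarrow> bool" where
  "almost_empty T \<longleftrightarrow> finite {i. T i \<noteq> {}}"

definition almost_empty_requirement :: "'a fml \<Rightarrow> bool" where
  "almost_empty_requirement \<phi> \<longleftrightarrow> (\<forall>T. equilibrium_model \<phi> T \<longrightarrow> almost_empty T)"

definition BigAnd :: "'a fml list \<Rightarrow> 'a fml" where
  "BigAnd xs = foldr And xs Top"

text \<open>The conjunction of all negated atoms of P (P = UNIV of a finite, ordered atom type).\<close>
definition all_neg :: "('a::{finite,linorder}) fml" where
  "all_neg = BigAnd (map (\<lambda>p. Neg (Atom p)) (sorted_list_of_set (UNIV :: 'a set)))"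

end

theory Submission
  imports Defs "HOL-Library.FuncSet"
begin

text \<open>
  In a total interpretation THT collapses to LTL, and for implication height at most one the
  "there" component is irrelevant below every implication. Hence any THT model (H,T) of a
  THT1 formula yields the total model (H,H), so a pointwise-minimal LTL model is an
  equilibrium model. Conversely every equilibrium model is an LTL model, and the almost-empty
  requirement makes it satisfy FG(all atoms false). For an almost-empty LTL model only
  finitely many words lie pointwise below it, so a minimal model exists below it.
\<close>

lemma tht_total_eq_ltl: "tht T T i \<psi> = ltl T i \<psi>"
  by (induction \<psi> arbitrary: i) auto

lemma tht_there_irrelevant:
  "imp_height \<psi> = 0 \<Longrightarrow> tht H T i \<psi> = tht H T' i \<psi>"
  by (induction \<psi> arbitrary: i) auto

lemma tht_imp_height_le_1_here_total:
  "imp_height \<psi> \<le> 1 \<Longrightarrow> tht H T i \<psi> \<Longrightarrow> tht H H i \<psi>"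
proof (induction \<psi> arbitrary: i)
  case (Imp a b)
  then have "imp_height a = 0" "imp_height b = 0" by auto
  with Imp.prems show ?case
    using tht_there_irrelevant[of a H T i H] tht_there_irrelevant[of b H T i H] by auto
next
  case (Until a b) then show ?case by simp metis
next
  case (Release a b) then show ?case by simp metis
qed auto

lemma minimal_ltl_model_is_equilibrium_model:
  assumes "\<phi> \<in> THT1" and "ltl T 0 \<phi>"
    and minimal: "\<And>H. H \<le> T \<Longrightarrow> ltl H 0 \<phi> \<Longrightarrow> H = T"
  shows "equilibrium_model \<phi> T"
  unfolding equilibrium_model_def
proof (intro conjI allI impI)
  show "tht T T 0 \<phi>" using assms(2) by (simp add: tht_total_eq_ltl)
  fix H assume H: "(\<forall>i. H i \<subseteq> T i) \<and> H \<noteq> T"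
  show "\<not> tht H T 0 \<phi>"
  proof
    assume "tht H T 0 \<phi>"
    then have "ltl H 0 \<phi>"
      using assms(1) tht_imp_height_le_1_here_total by (fastforce simp: THT1_def tht_total_eq_ltl)
    with H minimal show False by (auto simp: le_fun_def)
  qed
qed

lemma equilibrium_model_is_ltl_model: "equilibrium_model \<phi> T \<Longrightarrow> ltl T 0 \<phi>"
  by (simp add: equilibrium_model_def tht_total_eq_ltl)

lemma ltl_BigAnd: "ltl w i (BigAnd xs) \<longleftrightarrow> (\<forall>x\<in>set xs. ltl w i x)"
  by (induction xs) (auto simp: BigAnd_def Top_def Neg_def)

lemma ltl_all_neg: "ltl w i all_neg \<longleftrightarrow> w i = {}"
  by (auto simp: all_neg_def ltl_BigAnd Neg_def)

lemma ltl_Fin_Glob_all_neg_iff_almost_empty: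
  "ltl w 0 (Fin (Glob all_neg)) \<longleftrightarrow> almost_empty w"
proof -
  have "ltl w 0 (Fin (Glob all_neg)) \<longleftrightarrow> (\<exists>N. \<forall>i\<ge>N. w i = {})"
    by (auto simp: Fin_def Glob_def Top_def Neg_def ltl_all_neg)
  also have "\<dots> \<longleftrightarrow> finite {i. w i \<noteq> {}}"
    by (metis (mono_tags, lifting) finite_nat_set_iff_bounded_le mem_Collect_eq not_less_eq_eq
        order.trans nat_le_linear)
  finally show ?thesis by (simp add: almost_empty_def)
qed

lemma finite_words_below_almost_empty:
  fixes w :: "'a::finite word"
  assumes "almost_empty w"
  shows "finite {H. H \<le> w}"
proof -
  let ?A = "{i. w i \<noteq> {}}"
  have "inj_on (\<lambda>H. restrict H ?A) {H. H \<le> w}"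
  proof (rule inj_onI)
    fix H H' assume "H \<in> {H. H \<le> w}" "H' \<in> {H. H \<le> w}"
      and eq: "restrict H ?A = restrict H' ?A"
    then have below: "H i \<subseteq> w i" "H' i \<subseteq> w i" for i by (auto simp: le_fun_def)
    show "H = H'"
    proof
      fix i
      show "H i = H' i"
      proof (cases "w i = {}")
        case True then show ?thesis using below[of i] by blast
      next
        case False then show ?thesis using fun_cong[OF eq, of i] by simp
      qed
    qed
  qed
  moreover have "(\<lambda>H. restrict H ?A) ` {H. H \<le> w} \<subseteq> (\<Pi>\<^sub>E i\<in>?A. Pow (w i))"
    by (auto simp: le_fun_def PiE_iff split: if_splits) blast
  moreover have "finite (\<Pi>\<^sub>E i\<in>?A. Pow (w i))"
    using assms by (intro finite_PiE) (auto simp: almost_empty_def)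
  ultimately show ?thesis by (meson finite_imageD finite_subset)
qed

lemma minimal_ltl_model_below:
  fixes w :: "'a::finite word"
  assumes "almost_empty w" and "ltl w 0 \<phi>"
  obtains T where "T \<le> w" "ltl T 0 \<phi>" "\<And>H. H \<le> T \<Longrightarrow> ltl H 0 \<phi> \<Longrightarrow> H = T"
proof -
  let ?S = "{H. H \<le> w \<and> ltl H 0 \<phi>}"
  have "finite ?S"
    using finite_words_below_almost_empty[OF assms(1)] by (rule finite_subset[rotated]) auto
  moreover have "w \<in> ?S" using assms(2) by simp
  ultimately obtain T where T: "T \<in> ?S" and minimal: "\<forall>H\<in>?S. H \<le> T \<longrightarrow> T = H"
    using finite_has_minimal2 by blast
  show ?thesis
  proof (rule that)
    show "T \<le> w" "ltl T 0 \<phi>" using T by auto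
    fix H assume "H \<le> T" "ltl H 0 \<phi>"
    with T minimal show "H = T" by (metis (mono_tags, lifting) mem_Collect_eq order.trans)
  qed
qed

theorem mainTheorem12:
  fixes \<phi> :: "('a::{finite,linorder}) fml"
  assumes "\<phi> \<in> THT1"
    and "almost_empty_requirement \<phi>"
  shows "(\<exists>T. equilibrium_model \<phi> T) \<longleftrightarrow> ltl_satisfiable (And \<phi> (Fin (Glob all_neg)))"
proof
  assume "\<exists>T. equilibrium_model \<phi> T"
  then obtain T where T: "equilibrium_model \<phi> T" by blast
  then have "almost_empty T" using assms(2) by (simp add: almost_empty_requirement_def)
  with T show "ltl_satisfiable (And \<phi> (Fin (Glob all_neg)))"
    unfolding ltl_satisfiable_def
    by (metis ltl.simps(4) equilibrium_model_is_ltl_model ltl_Fin_Glob_all_neg_iff_almost_empty)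
next
  assume "ltl_satisfiable (And \<phi> (Fin (Glob all_neg)))"
  then obtain w where "almost_empty w" "ltl w 0 \<phi>"
    by (auto simp: ltl_satisfiable_def ltl_Fin_Glob_all_neg_iff_almost_empty)
  then obtain T where "ltl T 0 \<phi>" "\<And>H. H \<le> T \<Longrightarrow> ltl H 0 \<phi> \<Longrightarrow> H = T"
    by (metis minimal_ltl_model_below)
  then show "\<exists>T. equilibrium_model \<phi> T"
    using minimal_ltl_model_is_equilibrium_model[OF assms(1)] by blast
qed

end
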